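(* Let $\mathbb{H}\in\{\mathbb{R},\mathbb{C}\}$, let $A\in\mathbb{H}^{m\times d}$ be any matrix, and let $\Omega\subset U_A$ be a convex domain. Then the map $b\mapsto P_{\mathcal{K}_A}(b)$ is continuous on $\Omega$.
   Context: $\mathcal{K}_A:=\{|Ax|:x\in\mathbb{H}^d\}\subset\mathbb{R}^m$ with $|Ax|$ the entrywise modulus; $P_{\mathcal{K}_A}(b)$ is the set of points of $\mathcal{K}_A$ at minimal Euclidean distance from $b$; $U_A:=\{b\in\mathbb{R}^m: P_{\mathcal{K}_A}(b)\text{ has exactly one element}\}$, and on $U_A$ the map $P_{\mathcal{K}_A}$ is regarded as single-valued. *)

theory Defs
  imports "HOL-Analysis.Analysis"
begin

text \<open>Matrices over H (H = real or complex) of size m x d are represented as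
  elements of H^'d^'m (rows indexed by 'm).\<close>

definition KA :: "('a::real_normed_field) ^'d^'m \<Rightarrow> (real^'m) set" where
  "KA A = {(\<chi> i. norm ((A *v x) $ i)) | x. True}"

definition proj_set :: "(real^'m) set \<Rightarrow> real^'m \<Rightarrow> (real^'m) set" where
  "proj_set K b = {y \<in> K. \<forall>z\<in>K. dist b y \<le> dist b z}"

definition UA :: "('a::real_normed_field) ^'d^'m \<Rightarrow> (real^'m) set" where
  "UA A = {b. \<exists>!y. y \<in> proj_set (KA A) b}"

text \<open>Single-valued projection (meaningful on UA A).\<close>
definition projA :: "('a::real_normed_field) ^'d^'m \<Rightarrow> real^'m \<Rightarrow> real^'m" where
  "projA A b = (THE y. y \<in> proj_set (KA A) b)"

end

theory Submission
  imports Defs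
begin

text \<open>
  \<open>K\<^sub>A\<close> is closed: it is the image of the closed subspace \<open>range (A *v \<cdot>)\<close> under the
  entrywise modulus, a continuous map that preserves norms and therefore maps bounded closed
  sets onto compact ones. For a closed set \<open>K\<close> the relation \<open>y \<in> P\<^sub>K(b)\<close> has a closed graph,
  and nearest points are locally bounded (\<open>|y - b| \<le> |P\<^sub>K(c) - b|\<close>). Where the projection
  is single valued it is therefore a locally bounded function with closed graph, hence
  continuous.
\<close>

lemma closed_norm_preserving_image:
  fixes f :: "'a::{real_normed_vector, heine_borel} \<Rightarrow> 'b::real_normed_vector"
  assumes cont: "continuous_on UNIV f" and norm_f: "\<And>x. norm (f x) = norm x" and "closed V"
  shows "closed (f ` V)"
proof -
  have "l \<in> f ` V" if "l \<in> closure (f ` V)" for l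
  proof -
    define R where "R = norm l + 1"
    have "compact (f ` (V \<inter> cball 0 R))"
      using continuous_on_subset[OF cont subset_UNIV] closed_Int_compact[OF \<open>closed V\<close> compact_cball]
      by (rule compact_continuous_image)
    then have closed_image: "closed (f ` (V \<inter> cball 0 R))"
      by (rule compact_imp_closed)
    have "l \<in> ball 0 R \<inter> closure (f ` V)"
      using that by (simp add: R_def)
    also have "\<dots> \<subseteq> closure (ball 0 R \<inter> f ` V)"
      by (simp add: open_Int_closure_subset)
    also have "\<dots> \<subseteq> f ` (V \<inter> cball 0 R)"
    proof (rule closure_minimal[OF _ closed_image])
      show "ball 0 R \<inter> f ` V \<subseteq> f ` (V \<inter> cball 0 R)"
        using norm_f by fastforce
    qed
    finally show ?thesis
      by blast
  qed
  then show ?thesis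
    using closure_subset_eq by blast
qed

lemma KA_eq_image: "KA A = (\<lambda>y. \<chi> i. norm (y $ i)) ` range ((*v) A)"
  by (auto simp: KA_def)

lemma closed_KA:
  fixes A :: "('a::{real_normed_field, euclidean_space})^'d^'m"
  shows "closed (KA A)"
  unfolding KA_eq_image
proof (rule closed_norm_preserving_image)
  show "continuous_on UNIV (\<lambda>y::'a^'m. \<chi> i. norm (y $ i))"
    by (intro continuous_intros)
  show "norm (\<chi> i. norm (y $ i)) = norm y" for y :: "'a^'m"
    by (simp add: norm_vec_def)
  show "closed (range ((*v) A))"
    by (intro closed_subspace linear_subspace_image matrix_vector_mul_linear subspace_UNIV)
qed

lemma closed_proj_set_graph:
  assumes "closed K"
  shows "closed {(b, y). y \<in> proj_set K b}"
proof -
  have "{(b, y). y \<in> proj_set K b} =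
      (UNIV \<times> K) \<inter> (\<Inter>z\<in>K. {p. dist (fst p) (snd p) \<le> dist (fst p) z})"
    by (auto simp: proj_set_def)
  also have "closed \<dots>"
    by (intro closed_Int closed_Times closed_UNIV assms closed_INT ballI closed_Collect_le
        continuous_on_dist continuous_on_fst continuous_on_snd continuous_on_id continuous_on_const)
  finally show ?thesis .
qed

lemma continuous_on_single_valued_proj:
  fixes g :: "real^'m \<Rightarrow> real^'m"
  assumes "closed K" and single: "\<And>b. b \<in> S \<Longrightarrow> proj_set K b = {g b}"
  shows "continuous_on S g"
  unfolding continuous_on_eq_continuous_within
proof
  fix c assume "c \<in> S"
  define S' where "S' = S \<inter> ball c 1"
  define T where "T = cball (0::real^'m) (norm c + dist c (g c) + 2)"
  have g_nearest: "g b \<in> K \<and> (\<forall>z\<in>K. dist b (g b) \<le> dist b z)" if "b \<in> S" for b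
    using single[OF that] by (auto simp: proj_set_def)
  have "g \<in> S' \<rightarrow> T"
  proof
    fix b assume "b \<in> S'"
    then have "b \<in> S" "dist b c < 1"
      by (auto simp: S'_def dist_commute)
    then have "dist b (g b) \<le> dist b (g c)"
      using g_nearest \<open>c \<in> S\<close> by blast
    also have "\<dots> \<le> dist b c + dist c (g c)"
      by (rule dist_triangle)
    finally show "g b \<in> T"
      using \<open>dist b c < 1\<close> norm_triangle_sub[of "g b" b] norm_triangle_sub[of b c]
      by (simp add: T_def dist_norm norm_minus_commute)
  qed
  moreover have "(\<lambda>b. (b, g b)) ` S' = (S' \<times> T) \<inter> {(b, y). y \<in> proj_set K b}"
    using \<open>g \<in> S' \<rightarrow> T\<close> single by (auto simp: S'_def)
  then have "closedin (top_of_set (S' \<times> T)) ((\<lambda>b. (b, g b)) ` S')"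
    using closed_proj_set_graph[OF \<open>closed K\<close>] by (simp add: closedin_closed_Int)
  ultimately have "continuous_on S' g"
    using continuous_closed_graph_eq[of T g S'] by (simp add: T_def)
  then have "continuous (at c within S') g"
    using \<open>c \<in> S\<close> by (simp add: S'_def continuous_on_eq_continuous_within)
  moreover have "at c within S' = at c within S"
    by (rule at_within_nhd[of c "ball c 1"]) (auto simp: S'_def)
  ultimately show "continuous (at c within S) g"
    by simp
qed

lemma proj_set_KA_eq_projA:
  assumes "b \<in> UA A"
  shows "proj_set (KA A) b = {projA A b}"
proof -
  have unique: "\<exists>!y. y \<in> proj_set (KA A) b"
    using assms by (simp add: UA_def)
  then have "projA A b \<in> proj_set (KA A) b"
    unfolding projA_def by (rule theI')
  with unique show ?thesis
    by blast
qed

lemma continuous_on_projA: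
  fixes A :: "('a::{real_normed_field, euclidean_space})^'d^'m"
  assumes "\<Omega> \<subseteq> UA A"
  shows "continuous_on \<Omega> (projA A)"
  by (rule continuous_on_single_valued_proj[OF closed_KA]) (use assms proj_set_KA_eq_projA in blast)

theorem lemma5p4:
  shows "(\<forall>(A::real^'d^'m) (\<Omega>::(real^'m) set).
            open \<Omega> \<and> connected \<Omega> \<and> convex \<Omega> \<and> \<Omega> \<subseteq> UA A
              \<longrightarrow> continuous_on \<Omega> (projA A))
       \<and> (\<forall>(A::complex^'d^'m) (\<Omega>::(real^'m) set).
            open \<Omega> \<and> connected \<Omega> \<and> convex \<Omega> \<and> \<Omega> \<subseteq> UA A
              \<longrightarrow> continuous_on \<Omega> (projA A))"
  by (simp add: continuous_on_projA)

end
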